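(* Let \(E\in\mathcal{B}_\infty\) with \(\mu(E)<\infty\). Then the restricted space \((E,\mu)\) is purely nonatomic.
   Context: Let $\mathcal{B}$ be the Borel $\sigma$-algebra of $\mathbb{R}$, $\lambda$ the Lebesgue measure, and $\mathcal{B}_{\infty}$ the $\sigma$-algebra on $\mathbb{R}^{\mathbb{N}}$ generated by the cylinder sets $\prod_{i=1}^{m}C_{i}\times\prod_{i=m+1}^{\infty}\mathbb{R}$ with $C_i\in\mathcal{B}$, $m\in\mathbb{N}$. Let $\mathcal{F}(\mathcal{B},\lambda)$ be the set of finite rectangles $\prod_{i\in\mathbb{N}}C_{i}$ with $C_i\in\mathcal{B}$ and $\prod_{i}\lambda(C_i)\in[0,\infty)$, with $\mathrm{vol}(\prod_{i}C_i):=\prod_i\lambda(C_i)$. The measure $\mu$ is the restriction to $\mathcal{B}_{\infty}$ of the outer measure $\mu^{\ast}(A):=\inf\{\sum_{n}\mathrm{vol}(\mathscr{C}_{n}) : \mathscr{C}_{n}\in\mathcal{F}(\mathcal{B},\lambda),\ A\subset\bigcup_{n}\mathscr{C}_{n}\}$ ($\inf\varnothing=\infty$). A measure space is purely nonatomic if it has no atoms, i.e., no measurable $A$ with positive measure such that every measurable $B\subset A$ has measure $0$ or that of $A$. *)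

theory Defs
  imports "HOL-Analysis.Analysis"
begin

text \<open>Points of R^N are sequences \<open>nat \<Rightarrow> real\<close> (coordinates indexed from 0).\<close>

definition cylinders :: "(nat \<Rightarrow> real) set set" where
  "cylinders = {{x. \<forall>i<m. x i \<in> C i} | m C. \<forall>i<m. C i \<in> sets borel}"

definition B_inf :: "(nat \<Rightarrow> real) set set" where
  "B_inf = sigma_sets UNIV cylinders"

definition rect :: "(nat \<Rightarrow> real set) \<Rightarrow> (nat \<Rightarrow> real) set" where
  "rect C = {x. \<forall>i. x i \<in> C i}"

definition rect_vol :: "(nat \<Rightarrow> real set) \<Rightarrow> ennreal" where
  "rect_vol C = lim (\<lambda>n. \<Prod>i<n. emeasure lborel (C i))"

definition finite_rect :: "(nat \<Rightarrow> real set) \<Rightarrow> bool" where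
  "finite_rect C \<longleftrightarrow> (\<forall>i. C i \<in> sets borel) \<and>
     (\<exists>v::ennreal. v < \<infinity> \<and> (\<lambda>n. \<Prod>i<n. emeasure lborel (C i)) \<longlonglongrightarrow> v)"

text \<open>The outer measure mu*; Inf of the empty set in ennreal is \<infinity>.\<close>
definition mu_outer :: "(nat \<Rightarrow> real) set \<Rightarrow> ennreal" where
  "mu_outer A = (INF R \<in> {R :: nat \<Rightarrow> nat \<Rightarrow> real set.
      (\<forall>n. finite_rect (R n)) \<and> A \<subseteq> (\<Union>n. rect (R n))}. \<Sum>n. rect_vol (R n))"

text \<open>The measure mu is mu* restricted to B_inf.\<close>

definition is_atom_in :: "(nat \<Rightarrow> real) set \<Rightarrow> (nat \<Rightarrow> real) set \<Rightarrow> bool" where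
  "is_atom_in E A \<longleftrightarrow> A \<in> B_inf \<and> A \<subseteq> E \<and> mu_outer A > 0 \<and>
     (\<forall>B. B \<in> B_inf \<and> B \<subseteq> A \<longrightarrow> mu_outer B = 0 \<or> mu_outer B = mu_outer A)"

definition purely_nonatomic_on :: "(nat \<Rightarrow> real) set \<Rightarrow> bool" where
  "purely_nonatomic_on E \<longleftrightarrow> \<not> (\<exists>A. is_atom_in E A)"

end

theory Submission
  imports Defs
begin

(* Suppose A \<subseteq> E is an atom; then 0 < mu A < \<infinity>. Cover A by finite rectangles R_n of finite
  total volume. Cutting the first side of R_n down to R_n0 \<inter> I scales its volume by the factor
  lambda(R_n0 \<inter> I) / lambda(R_n0), so the slab A \<inter> {x. x_0 \<in> I} has outer measure at most
  \<Sum>n min(vol R_n, lambda(I) vol R_n / lambda(R_n0)), which tends to 0 with lambda(I) by dominated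
  convergence. Hence all slabs over short enough intervals have measure below mu A, hence measure 0
  because A is an atom; but countably many of them cover A, so mu A = 0. *)

lemma mu_outer_mono: "A \<subseteq> B \<Longrightarrow> mu_outer A \<le> mu_outer B"
  unfolding mu_outer_def by (rule INF_superset_mono) auto

lemma mu_outer_le_cover:
  "(\<And>n. finite_rect (R n)) \<Longrightarrow> A \<subseteq> (\<Union>n. rect (R n)) \<Longrightarrow> mu_outer A \<le> (\<Sum>n. rect_vol (R n))"
  unfolding mu_outer_def by (rule INF_lower) auto

lemma mu_outer_less_cover:
  assumes "mu_outer A < c"
  obtains R where "\<And>n. finite_rect (R n)" "A \<subseteq> (\<Union>n. rect (R n))" "(\<Sum>n. rect_vol (R n)) < c"
  using assms unfolding mu_outer_def by (auto simp: INF_less_iff)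

lemma mu_outer_le_double_cover:
  assumes Q_rect: "\<And>k n. finite_rect (Q k n)" and Q_cover: "\<And>k. A k \<subseteq> (\<Union>n. rect (Q k n))"
  shows "mu_outer (\<Union>k. A k) \<le> (\<Sum>k. \<Sum>n. rect_vol (Q k n))"
proof -
  define R where "R m = Q (fst (prod_decode m)) (snd (prod_decode m))" for m
  have "mu_outer (\<Union>k. A k) \<le> (\<Sum>m. rect_vol (R m))"
  proof (rule mu_outer_le_cover)
    show "finite_rect (R m)" for m
      unfolding R_def by (rule Q_rect)
    show "(\<Union>k. A k) \<subseteq> (\<Union>m. rect (R m))"
    proof
      fix x assume "x \<in> (\<Union>k. A k)"
      then obtain k n where "x \<in> rect (Q k n)"
        using Q_cover by blast
      then have "x \<in> rect (R (prod_encode (k, n)))"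
        by (simp add: R_def)
      then show "x \<in> (\<Union>m. rect (R m))" by blast
    qed
  qed
  also have "(\<Sum>m. rect_vol (R m)) = (\<Sum>k. \<Sum>n. rect_vol (Q k n))"
    unfolding R_def by (rule suminf_ennreal_2dimen) simp
  finally show ?thesis .
qed

lemma mu_outer_countably_subadditive: "mu_outer (\<Union>k. A k) \<le> (\<Sum>k. mu_outer (A k))"
proof (rule ennreal_le_epsilon)
  fix e :: real
  assume sum_finite: "(\<Sum>k. mu_outer (A k)) < top" and "0 < e"
  define w where "w k = e * (1/2) ^ Suc k" for k
  have w_pos: "0 < w k" for k
    using \<open>0 < e\<close> by (simp add: w_def)
  have "w sums e"
    unfolding w_def using sums_mult[OF power_half_series, of e] by simp
  then have w_suminf: "(\<Sum>k. ennreal (w k)) = ennreal e"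
    using w_pos by (simp add: suminf_ennreal2 sums_summable sums_unique[symmetric] less_imp_le)
  have "mu_outer (A k) < mu_outer (A k) + ennreal (w k)" for k
  proof -
    have "mu_outer (A k) + 0 < mu_outer (A k) + ennreal (w k)"
      using ennreal_suminf_lessD[OF sum_finite, of k] w_pos[of k]
      unfolding ennreal_add_left_cancel_less by simp
    then show ?thesis
      by simp
  qed
  then have "\<forall>k. \<exists>Q. (\<forall>n. finite_rect (Q n)) \<and> A k \<subseteq> (\<Union>n. rect (Q n)) \<and>
      (\<Sum>n. rect_vol (Q n)) < mu_outer (A k) + ennreal (w k)"
    by (metis mu_outer_less_cover)
  then obtain Q where Q_rect: "\<And>k n. finite_rect (Q k n)"
    and Q_cover: "\<And>k. A k \<subseteq> (\<Union>n. rect (Q k n))"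
    and Q_vol: "\<And>k. (\<Sum>n. rect_vol (Q k n)) < mu_outer (A k) + ennreal (w k)"
    by metis
  have "mu_outer (\<Union>k. A k) \<le> (\<Sum>k. \<Sum>n. rect_vol (Q k n))"
    using Q_rect Q_cover by (rule mu_outer_le_double_cover)
  also have "\<dots> \<le> (\<Sum>k. mu_outer (A k) + ennreal (w k))"
    by (intro suminf_le less_imp_le Q_vol summableI)
  also have "\<dots> = (\<Sum>k. mu_outer (A k)) + ennreal e"
    by (simp add: suminf_add[symmetric] w_suminf)
  finally show "mu_outer (\<Union>k. A k) \<le> (\<Sum>k. mu_outer (A k)) + ennreal e" .
qed

(* With ennreal division this also covers a = 0 (then b = 0) and a = \<infinity> (then v / a = 0 and
  t is eventually 0). *)
lemma tendsto_rescale_ennreal: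
  fixes a b v :: ennreal and t :: "nat \<Rightarrow> ennreal"
  assumes lim: "(\<lambda>n. a * t n) \<longlonglongrightarrow> v" and "v < \<infinity>" and "b \<le> a"
  shows "(\<lambda>n. b * t n) \<longlonglongrightarrow> b * (v / a)"
proof -
  consider "a = 0" | "a = \<infinity>" | "0 < a" "a < \<infinity>"
    by (metis infinity_ennreal_def not_gr_zero top.not_eq_extremum)
  then show ?thesis
  proof cases
    case 1
    then show ?thesis
      using \<open>b \<le> a\<close> by simp
  next
    case 2
    have "eventually (\<lambda>n. a * t n < \<infinity>) sequentially"
      using order_tendstoD(2)[OF lim \<open>v < \<infinity>\<close>] .
    then have "eventually (\<lambda>n. b * t n = 0) sequentially"
      by eventually_elim (use 2 in \<open>auto simp: ennreal_top_mult split: if_splits\<close>)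
    then show ?thesis
      using 2 by (simp add: tendsto_eventually)
  next
    case 3
    have "b / a < \<infinity>"
      using 3 \<open>b \<le> a\<close>
      by (auto simp: ennreal_divide_eq_top_iff less_top[symmetric] top_unique)
    then have "(\<lambda>n. b / a * (a * t n)) \<longlonglongrightarrow> b / a * v"
      using lim by (simp add: ennreal_tendsto_cmult)
    moreover have "b / a * (a * t n) = b * t n" for n
      using 3 by (simp add: ennreal_divide_times mult.assoc[symmetric])
    ultimately show ?thesis
      by (simp add: ennreal_divide_times)
  qed
qed

lemma rect_vol_eqI: "(\<lambda>n. \<Prod>i<n. emeasure lborel (C i)) \<longlonglongrightarrow> v \<Longrightarrow> rect_vol C = v"
  by (simp add: rect_vol_def limI)

lemma finite_rect_side_borel: "finite_rect C \<Longrightarrow> C i \<in> sets borel"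
  unfolding finite_rect_def by blast

lemma finite_rect_replace_first_side:
  assumes C: "finite_rect C" and D: "D \<in> sets borel"
    and le: "emeasure lborel D \<le> emeasure lborel (C 0)"
  shows "finite_rect (C(0 := D))"
    and "rect_vol (C(0 := D)) = emeasure lborel D * (rect_vol C / emeasure lborel (C 0))"
proof -
  obtain v where "v < \<infinity>" and lim: "(\<lambda>n. \<Prod>i<n. emeasure lborel (C i)) \<longlonglongrightarrow> v"
    using C unfolding finite_rect_def by auto
  have vol_C: "rect_vol C = v"
    using lim by (rule rect_vol_eqI)
  define a where "a = emeasure lborel (C 0)"
  define t where "t n = (\<Prod>i<n. emeasure lborel (C (Suc i)))" for n
  have shift: "(\<Prod>i<Suc n. emeasure lborel ((C(0 := Y)) i)) = emeasure lborel Y * t n" for Y n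
    unfolding t_def by (subst prod.lessThan_Suc_shift) simp
  have lim_a: "(\<lambda>n. a * t n) \<longlonglongrightarrow> v"
    using LIMSEQ_Suc[OF lim] shift[of "C 0"] by (simp add: a_def)
  have "(\<lambda>n. emeasure lborel D * t n) \<longlonglongrightarrow> emeasure lborel D * (v / a)"
    using lim_a \<open>v < \<infinity>\<close> le unfolding a_def by (rule tendsto_rescale_ennreal)
  then have "(\<lambda>n. \<Prod>i<Suc n. emeasure lborel ((C(0 := D)) i)) \<longlonglongrightarrow> emeasure lborel D * (v / a)"
    unfolding shift .
  then have lim_D: "(\<lambda>n. \<Prod>i<n. emeasure lborel ((C(0 := D)) i)) \<longlonglongrightarrow> emeasure lborel D * (v / a)"
    by (rule LIMSEQ_imp_Suc)
  then show "rect_vol (C(0 := D)) = emeasure lborel D * (rect_vol C / emeasure lborel (C 0))"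
    unfolding vol_C a_def by (rule rect_vol_eqI)
  have "emeasure lborel D * (v / a) \<le> a * (v / a)"
    using le unfolding a_def by (rule mult_right_mono) simp
  also have "a * (v / a) = v"
    using tendsto_rescale_ennreal[OF lim_a \<open>v < \<infinity>\<close> order_refl] lim_a by (rule LIMSEQ_unique)
  also note \<open>v < \<infinity>\<close>
  finally have "emeasure lborel D * (v / a) < \<infinity>" .
  then show "finite_rect (C(0 := D))"
    using C D lim_D unfolding finite_rect_def by auto
qed

lemma rect_vol_divide_first_side_less_top:
  assumes C: "finite_rect C"
  shows "rect_vol C / emeasure lborel (C 0) < \<infinity>"
proof -
  obtain v where "v < \<infinity>" and "(\<lambda>n. \<Prod>i<n. emeasure lborel (C i)) \<longlonglongrightarrow> v"
    using C unfolding finite_rect_def by auto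
  then have "rect_vol C < \<infinity>"
    by (simp add: rect_vol_eqI)
  have vol_C: "rect_vol C = emeasure lborel (C 0) * (rect_vol C / emeasure lborel (C 0))"
    using finite_rect_replace_first_side(2)[OF C finite_rect_side_borel[OF C] order_refl]
    unfolding fun_upd_triv .
  show ?thesis
  proof (cases "emeasure lborel (C 0) = 0")
    case True
    then have "rect_vol C = 0"
      using vol_C by simp
    then show ?thesis
      by (simp add: divide_ennreal_def)
  next
    case False
    then show ?thesis
      using \<open>rect_vol C < \<infinity>\<close> by (simp add: ennreal_divide_eq_top_iff less_top[symmetric])
  qed
qed

lemma mu_outer_slab_le:
  assumes R: "\<And>n. finite_rect (R n)" and cover: "A \<subseteq> (\<Union>n. rect (R n))" and I: "I \<in> sets borel"
  shows "mu_outer (A \<inter> {x. x 0 \<in> I}) \<le>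
    (\<Sum>n. min (rect_vol (R n)) (emeasure lborel I * (rect_vol (R n) / emeasure lborel (R n 0))))"
proof -
  define S where "S n = (R n)(0 := R n 0 \<inter> I)" for n
  have R0: "R n 0 \<in> sets borel" for n
    using R by (rule finite_rect_side_borel)
  have side: "R n 0 \<inter> I \<in> sets borel" "emeasure lborel (R n 0 \<inter> I) \<le> emeasure lborel (R n 0)" for n
    using R0 I by (auto intro: emeasure_mono)
  have S: "finite_rect (S n)"
    and vol_S: "rect_vol (S n) = emeasure lborel (R n 0 \<inter> I) * (rect_vol (R n) / emeasure lborel (R n 0))"
    for n
    unfolding S_def using finite_rect_replace_first_side[OF R side] by blast+
  have "A \<inter> {x. x 0 \<in> I} \<subseteq> (\<Union>n. rect (S n))"
  proof
    fix x assume "x \<in> A \<inter> {x. x 0 \<in> I}"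
    then obtain n where "x \<in> rect (R n)" and "x 0 \<in> I"
      using cover by blast
    then have "x \<in> rect (S n)"
      unfolding S_def rect_def by simp
    then show "x \<in> (\<Union>n. rect (S n))" by blast
  qed
  then have "mu_outer (A \<inter> {x. x 0 \<in> I}) \<le> (\<Sum>n. rect_vol (S n))"
    using S by (intro mu_outer_le_cover)
  also have "\<dots> \<le> (\<Sum>n. min (rect_vol (R n)) (emeasure lborel I * (rect_vol (R n) / emeasure lborel (R n 0))))"
  proof (intro suminf_le summableI min.boundedI)
    fix n
    have "rect_vol (S n) \<le> emeasure lborel (R n 0) * (rect_vol (R n) / emeasure lborel (R n 0))"
      unfolding vol_S using R0 I by (intro mult_right_mono emeasure_mono) auto
    also have "\<dots> = rect_vol (R n)"
      using finite_rect_replace_first_side(2)[OF R R0 order_refl, unfolded fun_upd_triv] by (rule sym)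
    finally show "rect_vol (S n) \<le> rect_vol (R n)" .
    show "rect_vol (S n) \<le> emeasure lborel I * (rect_vol (R n) / emeasure lborel (R n 0))"
      unfolding vol_S using R0 I by (intro mult_right_mono emeasure_mono) auto
  qed
  finally show ?thesis .
qed

lemma tendsto_suminf_min_scaled:
  fixes v k :: "nat \<Rightarrow> real"
  assumes v: "\<And>n. 0 \<le> v n" and k: "\<And>n. 0 \<le> k n" and "summable v"
  shows "((\<lambda>\<delta>. \<Sum>n. min (v n) (\<delta> * k n)) \<longlongrightarrow> 0) (at_right 0)"
proof -
  have "((\<lambda>\<delta>. \<Sum>n. min (v n) (\<delta> * k n)) \<longlongrightarrow> (\<Sum>n. 0 :: real)) (at_right 0)"
  proof (rule tannerys_theorem[THEN conjunct2, THEN conjunct2])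
    show "((\<lambda>\<delta>. min (v n) (\<delta> * k n)) \<longlongrightarrow> 0) (at_right 0)" for n
    proof -
      have "((\<lambda>\<delta>. min (v n) (\<delta> * k n)) \<longlongrightarrow> min (v n) (0 * k n)) (at_right 0)"
        by (intro tendsto_intros)
      then show ?thesis
        using v[of n] by (simp add: min_absorb2)
    qed
    have "eventually (\<lambda>x. True \<and> 0 < snd x) (at_top \<times>\<^sub>F at_right (0::real))"
      by (intro eventually_prodI) (simp_all add: eventually_at_right_less)
    then show "eventually (\<lambda>(n, \<delta>). norm (min (v n) (\<delta> * k n)) \<le> v n) (at_top \<times>\<^sub>F at_right 0)"
      by (rule eventually_mono) (auto simp: case_prod_beta abs_of_nonneg v k)
  qed (use \<open>summable v\<close> in simp_all)
  then show ?thesis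
    by simp
qed

lemma mu_outer_thin_slab_less:
  assumes "mu_outer A < \<infinity>" and "0 < c"
  obtains \<delta> where "0 < \<delta>"
    and "\<And>I. I \<in> sets borel \<Longrightarrow> emeasure lborel I \<le> ennreal \<delta> \<Longrightarrow>
      mu_outer (A \<inter> {x. x 0 \<in> I}) < ennreal c"
proof -
  obtain R where R: "\<And>n. finite_rect (R n)" and cover: "A \<subseteq> (\<Union>n. rect (R n))"
    and vol_finite: "(\<Sum>n. rect_vol (R n)) < \<infinity>"
    using mu_outer_less_cover[OF assms(1)] by blast
  define K where "K n = rect_vol (R n) / emeasure lborel (R n 0)" for n
  define v where "v n = enn2real (rect_vol (R n))" for n
  define k where "k n = enn2real (K n)" for n
  have vol_R: "rect_vol (R n) = ennreal (v n)" for n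
    using ennreal_suminf_lessD[OF vol_finite, of n] by (simp add: v_def less_top[symmetric])
  have K: "K n = ennreal (k n)" for n
    using rect_vol_divide_first_side_less_top[OF R, of n] by (simp add: K_def k_def less_top[symmetric])
  have v_nonneg: "0 \<le> v n" and k_nonneg: "0 \<le> k n" for n
    by (simp_all add: v_def k_def)
  have "summable v"
    using vol_finite by (intro summable_suminf_not_top v_nonneg) (simp add: vol_R less_top[symmetric])
  from order_tendstoD(2)[OF tendsto_suminf_min_scaled[of v k, OF v_nonneg k_nonneg this] \<open>0 < c\<close>]
  obtain b where "0 < b" and small: "\<And>\<delta>. 0 < \<delta> \<Longrightarrow> \<delta> < b \<Longrightarrow> (\<Sum>n. min (v n) (\<delta> * k n)) < c"
    unfolding eventually_at_right_field by auto
  show ?thesis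
  proof (rule that[of "b / 2"])
    show "0 < b / 2"
      using \<open>0 < b\<close> by simp
    fix I :: "real set"
    assume I: "I \<in> sets borel" and short: "emeasure lborel I \<le> ennreal (b / 2)"
    have summable_min: "summable (\<lambda>n. min (v n) (b / 2 * k n))"
      using \<open>summable v\<close> by (rule summable_comparison_test') (use v_nonneg k_nonneg \<open>0 < b\<close> in auto)
    have "mu_outer (A \<inter> {x. x 0 \<in> I}) \<le> (\<Sum>n. min (rect_vol (R n)) (emeasure lborel I * K n))"
      using mu_outer_slab_le[OF R cover I] unfolding K_def .
    also have "\<dots> \<le> (\<Sum>n. ennreal (min (v n) (b / 2 * k n)))"
    proof (intro suminf_le summableI)
      fix n
      have "emeasure lborel I * K n \<le> ennreal (b / 2) * ennreal (k n)"
        unfolding K using short by (rule mult_right_mono) simp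
      also have "\<dots> = ennreal (b / 2 * k n)"
        using \<open>0 < b\<close> k_nonneg[of n] by (intro ennreal_mult[symmetric]) auto
      finally have "emeasure lborel I * K n \<le> ennreal (b / 2 * k n)" .
      then have "min (rect_vol (R n)) (emeasure lborel I * K n) \<le> min (ennreal (v n)) (ennreal (b / 2 * k n))"
        unfolding vol_R by (rule min.mono[OF order_refl])
      also have "\<dots> = ennreal (min (v n) (b / 2 * k n))"
        using v_nonneg[of n] k_nonneg[of n] \<open>0 < b\<close> by (intro min_ennreal) auto
      finally show "min (rect_vol (R n)) (emeasure lborel I * K n) \<le> ennreal (min (v n) (b / 2 * k n))" .
    qed
    also have "\<dots> = ennreal (\<Sum>n. min (v n) (b / 2 * k n))"
      using summable_min v_nonneg k_nonneg \<open>0 < b\<close> by (simp add: suminf_ennreal2)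
    also have "\<dots> < ennreal c"
      using small[of "b / 2"] \<open>0 < b\<close> \<open>0 < c\<close> by (simp add: ennreal_lessI)
    finally show "mu_outer (A \<inter> {x. x 0 \<in> I}) < ennreal c" .
  qed
qed

lemma sigma_algebra_B_inf: "sigma_algebra UNIV B_inf"
  unfolding B_inf_def by (rule sigma_algebra_sigma_sets) simp

lemma B_inf_Int: "A \<in> B_inf \<Longrightarrow> B \<in> B_inf \<Longrightarrow> A \<inter> B \<in> B_inf"
proof -
  interpret sigma_algebra UNIV B_inf
    by (rule sigma_algebra_B_inf)
  show "A \<in> B_inf \<Longrightarrow> B \<in> B_inf \<Longrightarrow> A \<inter> B \<in> B_inf"
    by (rule Int)
qed

lemma slab_in_B_inf:
  assumes "I \<in> sets borel"
  shows "{x. x 0 \<in> I} \<in> B_inf"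
proof -
  have "{x :: nat \<Rightarrow> real. x 0 \<in> I} = {x. \<forall>i<1. x i \<in> (\<lambda>_. I) i}"
    by simp
  also have "\<dots> \<in> cylinders"
    unfolding cylinders_def using assms by (intro CollectI exI[of _ "1::nat"] exI[of _ "\<lambda>_. I"]) simp
  finally show ?thesis
    unfolding B_inf_def by (rule sigma_sets.Basic)
qed

definition grid_interval :: "real \<Rightarrow> nat \<Rightarrow> real set" where
  "grid_interval \<delta> m = {of_int (int_decode m) * \<delta> .. (of_int (int_decode m) + 1) * \<delta>}"

lemma grid_interval_borel: "grid_interval \<delta> m \<in> sets borel"
  by (simp add: grid_interval_def)

lemma emeasure_grid_interval: "0 < \<delta> \<Longrightarrow> emeasure lborel (grid_interval \<delta> m) = ennreal \<delta>"
  by (simp add: grid_interval_def algebra_simps)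

lemma UN_grid_interval:
  assumes "0 < \<delta>"
  shows "(\<Union>m. grid_interval \<delta> m) = UNIV"
proof -
  have "x \<in> grid_interval \<delta> (int_encode \<lfloor>x / \<delta>\<rfloor>)" for x
    using floor_divide_lower[OF assms, of x] floor_divide_upper[OF assms, of x]
    by (simp add: grid_interval_def int_encode_inverse)
  then show ?thesis
    by blast
qed

lemma mu_outer_eq_0_if_grid_slabs_null:
  assumes "0 < \<delta>" and null: "\<And>m. mu_outer (A \<inter> {x. x 0 \<in> grid_interval \<delta> m}) = 0"
  shows "mu_outer A = 0"
proof -
  have "A \<subseteq> (\<Union>m. A \<inter> {x. x 0 \<in> grid_interval \<delta> m})"
  proof
    fix x assume "x \<in> A"
    moreover have "x 0 \<in> (\<Union>m. grid_interval \<delta> m)"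
      unfolding UN_grid_interval[OF \<open>0 < \<delta>\<close>] by simp
    ultimately show "x \<in> (\<Union>m. A \<inter> {x. x 0 \<in> grid_interval \<delta> m})"
      by blast
  qed
  then have "mu_outer A \<le> mu_outer (\<Union>m. A \<inter> {x. x 0 \<in> grid_interval \<delta> m})"
    by (rule mu_outer_mono)
  also have "\<dots> \<le> (\<Sum>m. mu_outer (A \<inter> {x. x 0 \<in> grid_interval \<delta> m}))"
    by (rule mu_outer_countably_subadditive)
  finally show ?thesis
    by (simp add: null)
qed

theorem propositionA5:
  assumes "E \<in> B_inf" and "mu_outer E < \<infinity>"
  shows "purely_nonatomic_on E"
  unfolding purely_nonatomic_on_def
proof
  assume "\<exists>A. is_atom_in E A"
  then obtain A where A: "A \<in> B_inf" "A \<subseteq> E" "0 < mu_outer A"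
    and atom: "\<And>B. B \<in> B_inf \<Longrightarrow> B \<subseteq> A \<Longrightarrow> mu_outer B = 0 \<or> mu_outer B = mu_outer A"
    unfolding is_atom_in_def by blast
  have A_finite: "mu_outer A < \<infinity>"
    using mu_outer_mono[OF A(2)] assms(2) by (rule le_less_trans)
  then have pos: "0 < enn2real (mu_outer A)" and c: "ennreal (enn2real (mu_outer A)) = mu_outer A"
    using A(3) by (simp_all add: enn2real_positive_iff less_top[symmetric])
  obtain \<delta> where "0 < \<delta>" and thin: "\<And>I. I \<in> sets borel \<Longrightarrow> emeasure lborel I \<le> ennreal \<delta> \<Longrightarrow>
      mu_outer (A \<inter> {x. x 0 \<in> I}) < mu_outer A"
    by (rule mu_outer_thin_slab_less[OF A_finite pos, unfolded c]) (rule that)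
  have "mu_outer (A \<inter> {x. x 0 \<in> grid_interval \<delta> m}) = 0" for m
  proof -
    have "A \<inter> {x. x 0 \<in> grid_interval \<delta> m} \<in> B_inf"
      by (intro B_inf_Int A(1) slab_in_B_inf grid_interval_borel)
    moreover have "mu_outer (A \<inter> {x. x 0 \<in> grid_interval \<delta> m}) \<noteq> mu_outer A"
      using thin[OF grid_interval_borel eq_refl[OF emeasure_grid_interval[OF \<open>0 < \<delta>\<close>]], of m]
      by (rule less_imp_neq)
    ultimately show ?thesis
      using atom[of "A \<inter> {x. x 0 \<in> grid_interval \<delta> m}"] by blast
  qed
  then have "mu_outer A = 0"
    by (rule mu_outer_eq_0_if_grid_slabs_null[OF \<open>0 < \<delta>\<close>])
  with A(3) show False
    by simp
qed

end
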